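(* The edge generating series of the Grand Dyck lattices is $$\sum_{n\ge0}\ell(\mathcal{GD}_n)x^n=\frac{x}{(1-4x)^{3/2}},$$ and for every $n\ge0$, $\ell(\mathcal{GD}_n)=\binom{2n}{n}\frac n2$. Consequently $i(\mathcal{GD}_n)=n/2$ for all $n$.
   Context: Steps: $U=(1,1)$, $D=(1,-1)$. $\mathcal{GD}_n$ is the set of all lattice paths from $(0,0)$ to $(2n,0)$ with steps $U,D$, partially ordered by $\gamma_1\le\gamma_2$ iff $\gamma_1$ lies weakly below $\gamma_2$. For a finite poset $P$, $\ell(P)$ is the number of edges of its Hasse diagram (number of covering pairs) and $i(P)=\ell(P)/|P|$. *)

theory Defs
  imports Complex_Main
begin

text \<open>A lattice path with steps U=(1,1) and D=(1,-1) is encoded as a list of booleans,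
  True = U, False = D. The height after the first k steps:\<close>

definition height :: "bool list \<Rightarrow> nat \<Rightarrow> int" where
  "height p k = sum_list (map (\<lambda>b. if b then 1 else -1) (take k p))"

definition GD :: "nat \<Rightarrow> bool list set" where
  "GD n = {p. length p = 2 * n \<and> height p (2 * n) = 0}"

definition gd_le :: "bool list \<Rightarrow> bool list \<Rightarrow> bool" where
  "gd_le p q \<longleftrightarrow> (\<forall>k \<le> length p. height p k \<le> height q k)"

definition covers :: "'a set \<Rightarrow> ('a \<Rightarrow> 'a \<Rightarrow> bool) \<Rightarrow> 'a \<Rightarrow> 'a \<Rightarrow> bool" where
  "covers P le a b \<longleftrightarrow> a \<in> P \<and> b \<in> P \<and> le a b \<and> a \<noteq> b \<and>
     \<not> (\<exists>c\<in>P. le a c \<and> le c b \<and> c \<noteq> a \<and> c \<noteq> b)"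

definition hasse_edges :: "'a set \<Rightarrow> ('a \<Rightarrow> 'a \<Rightarrow> bool) \<Rightarrow> nat" where
  "hasse_edges P le = card {(a, b). covers P le a b}"

definition hasse_index :: "'a set \<Rightarrow> ('a \<Rightarrow> 'a \<Rightarrow> bool) \<Rightarrow> real" where
  "hasse_index P le = real (hasse_edges P le) / real (card P)"

end

theory Submission
  imports Defs "HOL-Analysis.Analysis"
begin

(* A valley of a path is a factor DU at
   positions i, i+1; replacing it by UD raises the height at the single point i+1 by 2.
   We show that the covering pairs of GD n are exactly the pairs (a, flip a i) with i a
   valley of a: such a flip is a cover because heights of paths of the same length have the
   same parity, so nothing fits strictly in between; conversely, if a < b then at a lowest
   point of a where b is strictly higher, a has a valley whose flip stays below b.

   Hence the number of edges is the number of pairs (a, i) with i a valley of a.  Deleting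
   the valley gives a bijection between these pairs for GD (m+1) and pairs (q, i) with q a
   path of length 2m with m up-steps and i <= 2m, so the count is (2m+1) * C(2m, m),
   which equals C(2n, n) * n / 2 for n = m+1.  Since |GD n| = C(2n, n), the index is n / 2,
   and the generating function follows from the binomial series of (1 - 4x) powr (-3/2),
   whose coefficients are (-3/2 gchoose m) * (-4)^m = (2m+1) * C(2m, m). *)


section \<open>Heights of lattice paths\<close>

definition step_val :: "bool list \<Rightarrow> nat \<Rightarrow> int" where
  "step_val p k = (if k < length p then (if p ! k then 1 else -1) else 0)"

lemma height_0 [simp]: "height p 0 = 0"
  by (simp add: height_def)

lemma height_Suc: "height p (Suc k) = height p k + step_val p k"
  by (cases "k < length p") (simp_all add: height_def step_val_def take_Suc_conv_app_nth)

lemma height_length: "height p (length p) = 2 * int (length (filter id p)) - int (length p)"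
proof -
  have "sum_list (map (\<lambda>b. if b then 1 else -1) p) = 2 * int (length (filter id p)) - int (length p)"
    by (induction p) auto
  then show ?thesis by (simp add: height_def)
qed

lemma height_parity: "k \<le> length p \<Longrightarrow> even (height p k + int k)"
proof (induction k)
  case (Suc k)
  have "step_val p k = 1 \<or> step_val p k = -1" using Suc.prems by (auto simp: step_val_def)
  then show ?case using Suc by (auto simp: height_Suc)
qed simp

lemma height_gap:
  assumes "k \<le> length p" "k \<le> length q" "height p k < height q k"
  shows "height p k + 2 \<le> height q k"
proof -
  have "even ((height q k + int k) - (height p k + int k))"
    using height_parity[OF assms(1)] height_parity[OF assms(2)] by simp
  then have "even (height q k - height p k)" by simp
  then have "height q k - height p k \<noteq> 1" by (metis odd_one)
  then show ?thesis using assms(3) by linarith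
qed

lemma path_eqI:
  assumes "length p = length q" "\<And>k. k \<le> length p \<Longrightarrow> height p k = height q k"
  shows "p = q"
proof (rule nth_equalityI)
  show "length p = length q" by fact
  fix k assume k: "k < length p"
  have "step_val p k = step_val q k"
    using assms(2)[of k] assms(2)[of "Suc k"] k by (simp add: height_Suc)
  then show "p ! k = q ! k" using k assms(1) by (auto simp: step_val_def split: if_splits)
qed

lemma GD_iff: "p \<in> GD n \<longleftrightarrow> length p = 2 * n \<and> length (filter id p) = n"
  using height_length[of p] by (auto simp: GD_def)

lemma length_GD: "p \<in> GD n \<Longrightarrow> length p = 2 * n"
  by (simp add: GD_def)


section \<open>Flipping a valley\<close>

definition valley :: "bool list \<Rightarrow> nat \<Rightarrow> bool" where
  "valley p i \<longleftrightarrow> Suc i < length p \<and> \<not> p ! i \<and> p ! Suc i"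

definition flip :: "bool list \<Rightarrow> nat \<Rightarrow> bool list" where
  "flip p i = p[i := True, Suc i := False]"

lemma length_flip [simp]: "length (flip p i) = length p"
  by (simp add: flip_def)

lemma flip_nth_self: "Suc i < length p \<Longrightarrow> flip p i ! i"
  by (simp add: flip_def nth_list_update)

lemma height_flip:
  assumes "valley p i"
  shows "height (flip p i) k = height p k + (if k = Suc i then 2 else 0)"
proof (induction k)
  case (Suc k)
  have "step_val (flip p i) k = step_val p k + (if k = i then 2 else if k = Suc i then -2 else 0)"
    using assms by (auto simp: step_val_def flip_def nth_list_update valley_def)
  then show ?case using Suc by (auto simp: height_Suc)
qed simp

lemma flip_GD: "p \<in> GD n \<Longrightarrow> valley p i \<Longrightarrow> flip p i \<in> GD n"
  using height_flip[of p i "2 * n"] by (auto simp: GD_def valley_def)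

lemma flip_neq: "valley p i \<Longrightarrow> flip p i \<noteq> p"
  using flip_nth_self[of i p] by (auto simp: valley_def)

lemma gd_le_flip: "valley p i \<Longrightarrow> gd_le p (flip p i)"
  by (simp add: gd_le_def height_flip)

lemma flip_inj:
  assumes "valley p i" "valley p j" "flip p i = flip p j"
  shows "i = j"
proof (rule ccontr)
  assume "i \<noteq> j"
  then have "\<not> flip p j ! i"
    using assms(1,2) by (cases "i = Suc j") (auto simp: flip_def nth_list_update valley_def)
  then show False using assms flip_nth_self[of i p] by (simp add: valley_def)
qed


section \<open>The covering relation\<close>

text \<open>Nothing lies strictly between a path and the flip of one of its valleys: by parity the
  heights of an intermediate path agree with one of them everywhere.\<close>
lemma between_flip:
  assumes v: "valley a i" and len: "length c = length a"
    and lo: "gd_le a c" and up: "gd_le c (flip a i)"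
  shows "c = a \<or> c = flip a i"
proof -
  have lo': "height a k \<le> height c k" and
       up': "height c k \<le> height a k + (if k = Suc i then 2 else 0)" if "k \<le> length a" for k
    using that lo up len height_flip[OF v] by (auto simp: gd_le_def)
  have off: "height c k = height a k" if "k \<le> length a" "k \<noteq> Suc i" for k
    using lo'[OF that(1)] up'[OF that(1)] that(2) by simp
  have si: "Suc i \<le> length a" using v by (simp add: valley_def)
  show ?thesis
  proof (cases "height a (Suc i) < height c (Suc i)")
    case True
    then have at_i: "height c (Suc i) = height a (Suc i) + 2"
      using height_gap[of "Suc i" a c] up'[OF si] si len by simp
    have "c = flip a i"
    proof (rule path_eqI)
      show "height c k = height (flip a i) k" if "k \<le> length c" for k
        using that len off at_i height_flip[OF v] by (cases "k = Suc i") auto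
    qed (simp add: len)
    then show ?thesis ..
  next
    case False
    then have at_i: "height c (Suc i) = height a (Suc i)" using lo'[OF si] by simp
    have "c = a"
    proof (rule path_eqI)
      show "height c k = height a k" if "k \<le> length c" for k
        using that len off at_i by (cases "k = Suc i") auto
    qed (rule len)
    then show ?thesis ..
  qed
qed

lemma cover_flip:
  assumes "a \<in> GD n" "valley a i"
  shows "covers (GD n) gd_le a (flip a i)"
  using assms flip_GD[OF assms] flip_neq[OF assms(2)] gd_le_flip[OF assms(2)]
    between_flip[OF assms(2)] length_GD
  unfolding covers_def by (metis length_flip)

text \<open>At a lowest point i+1 of a at which b is strictly higher, a goes down into that point and
  up out of it: otherwise a neighbouring point would be either lower (and still below b) or a
  point where a and b agree, which is impossible as b is at least 2 higher at i+1.\<close>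
lemma valley_at_lowest_gap:
  assumes len: "length a = length b" and le: "gd_le a b"
    and i: "Suc i < length a" "height a (Suc i) < height b (Suc i)"
    and lowest: "\<And>j. j \<le> length a \<Longrightarrow> height a j < height b j \<Longrightarrow> height a (Suc i) \<le> height a j"
  shows "valley a i"
proof -
  have le': "height a j \<le> height b j" if "j \<le> length a" for j
    using le that by (simp add: gd_le_def)
  have gap: "height a (Suc i) + 2 \<le> height b (Suc i)"
    using height_gap[of "Suc i" a b] i len by simp
  have step_b: "step_val b j \<le> 1 \<and> -1 \<le> step_val b j" for j
    by (simp add: step_val_def)
  have "\<not> a ! i"
  proof
    assume "a ! i"
    then have down: "height a i = height a (Suc i) - 1"
      using i(1) by (simp add: height_Suc step_val_def)
    show False
    proof (cases "height a i < height b i")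
      case True then show False using lowest[of i] down i(1) by simp
    next
      case False
      then have "height a i = height b i" using le'[of i] i(1) by simp
      then show False using down gap step_b[of i] height_Suc[of b i] by linarith
    qed
  qed
  moreover have "a ! Suc i"
  proof (rule ccontr)
    assume "\<not> a ! Suc i"
    then have down: "height a (Suc (Suc i)) = height a (Suc i) - 1"
      using i(1) by (simp add: height_Suc[of a "Suc i"] step_val_def)
    show False
    proof (cases "height a (Suc (Suc i)) < height b (Suc (Suc i))")
      case True then show False using lowest[of "Suc (Suc i)"] down i(1) by simp
    next
      case False
      then have "height a (Suc (Suc i)) = height b (Suc (Suc i))"
        using le'[of "Suc (Suc i)"] i(1) by simp
      then show False using down gap step_b[of "Suc i"] height_Suc[of b "Suc i"] by linarith
    qed
  qed
  ultimately show ?thesis using i(1) by (simp add: valley_def)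
qed

lemma flip_below:
  assumes len: "length a = length b" and le: "gd_le a b" and ne: "a \<noteq> b"
    and ends: "height a (length a) = height b (length b)"
  obtains i where "valley a i" "gd_le (flip a i) b"
proof -
  define S where "S = {k. k \<le> length a \<and> height a k < height b k}"
  have "S \<noteq> {}"
  proof
    assume empty: "S = {}"
    have "a = b"
    proof (rule path_eqI)
      show "height a k = height b k" if "k \<le> length a" for k
      proof -
        have "\<not> height a k < height b k" using empty that by (auto simp: S_def)
        moreover have "height a k \<le> height b k" using le that by (simp add: gd_le_def)
        ultimately show ?thesis by simp
      qed
    qed (rule len)
    then show False using ne by simp
  qed
  moreover have "finite S" by (simp add: S_def)
  ultimately obtain k where kS: "k \<in> S" and lowest: "\<And>j. j \<in> S \<Longrightarrow> height a k \<le> height a j"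
    using arg_min_if_finite(1,2)[of S "height a"] by (metis not_le)
  have "k \<noteq> 0" using kS by (metis S_def height_0 less_irrefl mem_Collect_eq)
  then obtain i where ki: "k = Suc i" using not0_implies_Suc by blast
  have "k \<noteq> length a" using kS ends len by (auto simp: S_def)
  then have i: "Suc i < length a" "height a (Suc i) < height b (Suc i)"
    using kS ki by (auto simp: S_def)
  have v: "valley a i"
    using valley_at_lowest_gap[OF len le i] lowest ki by (simp add: S_def)
  have "height a (Suc i) + 2 \<le> height b (Suc i)" using height_gap[of "Suc i" a b] i len by simp
  then have "gd_le (flip a i) b"
    using le by (auto simp: gd_le_def height_flip[OF v])
  with v show ?thesis by (rule that)
qed

lemma covers_GD_iff:
  "covers (GD n) gd_le a b \<longleftrightarrow> a \<in> GD n \<and> (\<exists>i. valley a i \<and> b = flip a i)"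
proof
  assume cv: "covers (GD n) gd_le a b"
  then have a: "a \<in> GD n" and b: "b \<in> GD n" and "gd_le a b" "a \<noteq> b"
    by (auto simp: covers_def)
  moreover have "length a = length b" "height a (length a) = height b (length b)"
    using a b by (auto simp: GD_def)
  ultimately obtain i where v: "valley a i" and below: "gd_le (flip a i) b"
    using flip_below by metis
  have "flip a i = b"
    using cv flip_GD[OF a v] gd_le_flip[OF v] below flip_neq[OF v] by (auto simp: covers_def)
  then show "a \<in> GD n \<and> (\<exists>i. valley a i \<and> b = flip a i)" using a v by blast
next
  assume "a \<in> GD n \<and> (\<exists>i. valley a i \<and> b = flip a i)"
  then show "covers (GD n) gd_le a b" using cover_flip by blast
qed


section \<open>Counting the covering pairs\<close>

definition valleys :: "nat \<Rightarrow> (bool list \<times> nat) set" where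
  "valleys n = {(a, i). a \<in> GD n \<and> valley a i}"

lemma hasse_edges_GD: "hasse_edges (GD n) gd_le = card (valleys n)"
proof -
  have "{(a, b). covers (GD n) gd_le a b} = (\<lambda>(a, i). (a, flip a i)) ` valleys n"
    by (auto simp: covers_GD_iff valleys_def)
  moreover have "inj_on (\<lambda>(a, i). (a, flip a i)) (valleys n)"
    by (auto intro!: inj_onI simp: valleys_def dest: flip_inj)
  ultimately show ?thesis unfolding hasse_edges_def by (simp add: card_image)
qed

definition words :: "nat \<Rightarrow> nat \<Rightarrow> bool list set" where
  "words m k = {q. length q = m \<and> length (filter id q) = k}"

lemma finite_words: "finite (words m k)"
  by (rule finite_subset[OF _ finite_lists_length_eq[of UNIV m]]) (auto simp: words_def)

lemma words_Suc:
  "words (Suc m) k = (if k = 0 then {} else Cons True ` words m (k - 1)) \<union> Cons False ` words m k"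
proof (intro set_eqI iffI)
  fix q assume "q \<in> words (Suc m) k"
  then show "q \<in> (if k = 0 then {} else Cons True ` words m (k - 1)) \<union> Cons False ` words m k"
    by (cases q) (auto simp: words_def split: if_splits)
qed (auto simp: words_def split: if_splits)

text \<open>Pascal's recurrence for the words gives the binomial count.\<close>
lemma card_words: "card (words m k) = m choose k"
proof (induction m arbitrary: k)
  case 0
  have "words 0 k = (if k = 0 then {[]} else {})" by (auto simp: words_def)
  then show ?case by simp
next
  case (Suc m)
  have "card (words (Suc m) k)
        = card (if k = 0 then {} else Cons True ` words m (k - 1)) + card (Cons False ` words m k)"
    unfolding words_Suc by (rule card_Un_disjoint) (auto simp: finite_words)
  also have "\<dots> = (if k = 0 then 0 else m choose (k - 1)) + (m choose k)"
    using Suc.IH by (simp add: card_image)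
  also have "\<dots> = Suc m choose k" by (cases k) auto
  finally show ?case .
qed

lemma card_GD: "card (GD n) = (2 * n) choose n"
proof -
  have "GD n = words (2 * n) n" by (auto simp: GD_iff words_def)
  then show ?thesis by (simp add: card_words)
qed

text \<open>Inserting a valley DU at position i; this inverts deleting a marked valley.\<close>
definition ins_valley :: "nat \<Rightarrow> bool list \<Rightarrow> bool list" where
  "ins_valley i q = take i q @ False # True # drop i q"

lemma ins_valley_props:
  assumes "i \<le> length q"
  shows "length (ins_valley i q) = Suc (Suc (length q))"
    and "length (filter id (ins_valley i q)) = Suc (length (filter id q))"
    and "valley (ins_valley i q) i"
    and "take i (ins_valley i q) = take i q"
    and "drop (Suc (Suc i)) (ins_valley i q) = drop i q"
proof -
  have "length (filter id q) = length (filter id (take i q)) + length (filter id (drop i q))"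
    by (metis append_take_drop_id filter_append length_append)
  then show "length (filter id (ins_valley i q)) = Suc (length (filter id q))"
    by (simp add: ins_valley_def)
qed (use assms in \<open>simp_all add: ins_valley_def valley_def nth_append\<close>)

lemma ins_valley_delete:
  assumes "valley a i"
  shows "ins_valley i (take i a @ drop (Suc (Suc i)) a) = a"
proof -
  have "drop i a = a ! i # a ! Suc i # drop (Suc (Suc i)) a"
    using assms by (metis Cons_nth_drop_Suc Suc_lessD valley_def)
  then have "a = take i a @ False # True # drop (Suc (Suc i)) a"
    using assms by (metis append_take_drop_id valley_def)
  then show ?thesis using assms by (simp add: ins_valley_def valley_def)
qed

lemma valleys_Suc:
  "valleys (Suc m) = (\<lambda>(q, i). (ins_valley i q, i)) ` (words (2 * m) m \<times> {..2 * m})"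
proof (intro set_eqI iffI)
  fix x assume "x \<in> valleys (Suc m)"
  then obtain a i where x: "x = (a, i)" and a: "a \<in> GD (Suc m)" and v: "valley a i"
    by (auto simp: valleys_def)
  define q where "q = take i a @ drop (Suc (Suc i)) a"
  have la: "length a = 2 * Suc m" and ups: "length (filter id a) = Suc m"
    using a by (auto simp: GD_iff)
  have ins: "ins_valley i q = a" unfolding q_def using v by (rule ins_valley_delete)
  have i: "i \<le> 2 * m" and lq: "length q = 2 * m" using v la by (auto simp: q_def valley_def)
  then have "q \<in> words (2 * m) m"
    using ins_valley_props(2)[of i q] ins ups by (simp add: words_def)
  then show "x \<in> (\<lambda>(q, i). (ins_valley i q, i)) ` (words (2 * m) m \<times> {..2 * m})"
    using x ins i by force
next
  fix x assume "x \<in> (\<lambda>(q, i). (ins_valley i q, i)) ` (words (2 * m) m \<times> {..2 * m})"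
  then obtain q i where "x = (ins_valley i q, i)" "q \<in> words (2 * m) m" "i \<le> 2 * m" by auto
  then show "x \<in> valleys (Suc m)"
    using ins_valley_props[of i q] by (auto simp: valleys_def GD_iff words_def)
qed

lemma inj_ins_valley: "inj_on (\<lambda>(q, i). (ins_valley i q, i)) (words (2 * m) m \<times> {..2 * m})"
proof -
  have "q = r" if "q \<in> words (2 * m) m" "r \<in> words (2 * m) m" "i \<le> 2 * m"
    and eq: "ins_valley i q = ins_valley i r" for q r i
  proof -
    have "i \<le> length q" "i \<le> length r" using that by (auto simp: words_def)
    then have "take i q = take i r" "drop i q = drop i r"
      using ins_valley_props(4,5) eq by metis+
    then show "q = r" by (metis append_take_drop_id)
  qed
  then show ?thesis by (auto intro!: inj_onI)
qed

lemma card_valleys_Suc: "card (valleys (Suc m)) = (2 * m + 1) * ((2 * m) choose m)"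
  unfolding valleys_Suc
  by (simp add: card_image[OF inj_ins_valley] card_cartesian_product card_words)

lemma valleys_0: "valleys 0 = {}"
  by (auto simp: valleys_def valley_def GD_def)


section \<open>Central binomial coefficients\<close>

lemma central_binomial_Suc:
  "Suc m * ((2 * Suc m) choose Suc m) = 2 * (2 * m + 1) * ((2 * m) choose m)"
proof -
  have "Suc m * ((2 * Suc m) choose Suc m) = 2 * (Suc m * ((2 * m + 1) choose m))"
    using Suc_times_binomial_eq[of "2 * m + 1" m] by (simp add: mult.commute)
  also have "Suc m * ((2 * m + 1) choose m) = (2 * m + 1) * ((2 * m) choose m)"
    using Suc_times_binomial_eq[of "2 * m" m] binomial_symmetric[of "Suc m" "2 * m + 1"]
    by (simp add: mult.commute)
  finally show ?thesis by simp
qed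

text \<open>The same recurrence, in the form that turns (2m+1) C(2m, m) into C(2n, n) n / 2.\<close>
lemma central_binomial_Suc_half:
  "real ((2 * Suc m) choose Suc m) * real (Suc m) / 2 = real (2 * m + 1) * real ((2 * m) choose m)"
proof -
  have "real ((2 * Suc m) choose Suc m) * real (Suc m) = real (2 * (2 * m + 1) * ((2 * m) choose m))"
    by (simp only: of_nat_mult[symmetric] mult.commute[of "(2 * Suc m) choose Suc m"]
        central_binomial_Suc)
  then show ?thesis by (simp only: of_nat_mult of_nat_numeral)
qed

text \<open>The binomial series coefficients of (1 - 4x) powr (-3/2).\<close>
lemma gbinomial_minus_three_halves:
  "((-3/2 :: real) gchoose m) * (-4) ^ m = real (2 * m + 1) * real ((2 * m) choose m)"
proof (induction m)
  case (Suc m)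
  have rec: "real (Suc m) * ((-3/2 :: real) gchoose Suc m) = (-3/2 - real m) * ((-3/2) gchoose m)"
    using gbinomial_mult_1[of "-3/2 :: real" m] by (simp add: algebra_simps)
  have "real (Suc m) * (((-3/2 :: real) gchoose Suc m) * (-4) ^ Suc m)
        = (real (Suc m) * ((-3/2 :: real) gchoose Suc m)) * (-4) ^ Suc m"
    by (simp only: ac_simps)
  also have "\<dots> = (-3/2 - real m) * ((-3/2) gchoose m) * ((-4) * (-4) ^ m)"
    by (simp only: rec power_Suc)
  also have "\<dots> = (6 + 4 * real m) * (((-3/2) gchoose m) * (-4) ^ m)"
    by (simp add: algebra_simps)
  also have "\<dots> = real (2 * Suc m + 1) * real (2 * (2 * m + 1) * ((2 * m) choose m))"
    using Suc.IH by (simp add: algebra_simps)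
  also have "\<dots> = real (Suc m) * (real (2 * Suc m + 1) * real ((2 * Suc m) choose Suc m))"
    by (subst central_binomial_Suc[symmetric]) (simp only: of_nat_mult ac_simps)
  finally show ?case by (metis mult_cancel_left of_nat_eq_0_iff nat.distinct(1))
qed simp


lemma hasse_edges_GD_formula:
  "real (hasse_edges (GD n) gd_le) = real ((2 * n) choose n) * real n / 2"
proof (cases n)
  case (Suc m)
  have "real (hasse_edges (GD n) gd_le) = real (2 * m + 1) * real ((2 * m) choose m)"
    using Suc by (simp add: hasse_edges_GD card_valleys_Suc algebra_simps)
  then show ?thesis using Suc by (simp only: central_binomial_Suc_half)
qed (simp add: hasse_edges_GD valleys_0)

text \<open>The series with coefficients C(2n, n) * n / 2 is x times the binomial series of
  (1 - 4x) powr (-3/2), shifted by one.\<close>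
lemma edge_series:
  fixes x :: real
  assumes "\<bar>x\<bar> < 1/4"
  shows "(\<lambda>n. real ((2 * n) choose n) * real n / 2 * x ^ n) sums (x / (1 - 4 * x) powr (3/2))"
proof -
  let ?E = "\<lambda>n. real ((2 * n) choose n) * real n / 2"
  have coeff: "x * (((-3/2) gchoose n) * (-4 * x) ^ n) = ?E (Suc n) * x ^ Suc n" for n
  proof -
    have "x * (((-3/2) gchoose n) * (-4 * x) ^ n) = x ^ Suc n * (((-3/2 :: real) gchoose n) * (-4) ^ n)"
      by (subst power_mult_distrib) (simp add: mult_ac)
    also have "\<dots> = x ^ Suc n * (real (2 * n + 1) * real ((2 * n) choose n))"
      by (simp only: gbinomial_minus_three_halves)
    also have "\<dots> = ?E (Suc n) * x ^ Suc n"
      by (simp only: central_binomial_Suc_half[symmetric] mult.commute[of "x ^ Suc n"])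
    finally show ?thesis .
  qed
  have "\<bar>-4 * x\<bar> < 1" using assms by simp
  from sums_mult[OF gen_binomial_real[OF this, of "-3/2"], of x]
  have "(\<lambda>n. ?E (Suc n) * x ^ Suc n) sums (x * (1 + -4 * x) powr (-3/2))"
    by (simp only: coeff)
  moreover have "x * (1 + -4 * x) powr (-3/2) = x / (1 - 4 * x) powr (3/2)"
    by (simp add: powr_minus_divide)
  ultimately have "(\<lambda>n. ?E (Suc n) * x ^ Suc n) sums (x / (1 - 4 * x) powr (3/2))"
    by simp
  then have "(\<lambda>n. ?E n * x ^ n) sums (x / (1 - 4 * x) powr (3/2) + ?E 0 * x ^ 0)"
    by (simp only: sums_Suc_iff[of "\<lambda>n. ?E n * x ^ n"])
  then show ?thesis by simp
qed

theorem mainTheorem5: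
  shows "(\<forall>x::real. \<bar>x\<bar> < 1/4 \<longrightarrow>
            (\<lambda>n. real (hasse_edges (GD n) gd_le) * x ^ n) sums (x / (1 - 4 * x) powr (3/2)))
       \<and> (\<forall>n. real (hasse_edges (GD n) gd_le) = real ((2 * n) choose n) * real n / 2)
       \<and> (\<forall>n. hasse_index (GD n) gd_le = real n / 2)"
proof (intro conjI allI impI)
  fix x :: real assume "\<bar>x\<bar> < 1/4"
  then show "(\<lambda>n. real (hasse_edges (GD n) gd_le) * x ^ n) sums (x / (1 - 4 * x) powr (3/2))"
    unfolding hasse_edges_GD_formula by (rule edge_series)
next
  fix n
  show "real (hasse_edges (GD n) gd_le) = real ((2 * n) choose n) * real n / 2"
    by (rule hasse_edges_GD_formula)
  have "real ((2 * n) choose n) > 0" by simp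
  then show "hasse_index (GD n) gd_le = real n / 2"
    unfolding hasse_index_def hasse_edges_GD_formula card_GD by simp
qed

end
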